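(* Let $n,k\ge1$, $d\ge3$. The cumulant homoscedastic secant variety $\log(\operatorname{Sec}^H_k(\mathcal G_{n,d}))\subseteq\mathbb{A}^K_{n,d}$ is a cone over $C^0_{n,k,d}$: writing $\mathbb{A}^K_{n,d}=\mathbb{A}^{K,1}\times\mathbb{A}^{K,2}\times\mathbb{A}^{K,3}_{n,d}$ (cumulants of order $1$, order $2$, and orders $3$ to $d$), its closure equals $\mathbb{A}^{K,1}\times\mathbb{A}^{K,2}\times C^0_{n,k,d}$, i.e. the first and second order cumulants are unconstrained and the cumulants of orders $3,\dots,d$ range exactly over $C^0_{n,k,d}$.
   Context: Let $u=(u_1,\dots,u_n)$, $V$ the space of real linear forms in $u$. The cumulant space $\mathbb{A}^K_{n,d}$ consists of truncated series $\sum_{1\le|a|\le d}\kappa_au^a/a!$ in $\mathbb{R}[u]/(u)^{d+1}$; $\mathbb{A}^{K,3}_{n,d}$ those with only terms of degree $3,\dots,d$. For a homoscedastic parameter $((\mu_i),(\lambda_i),\Sigma)$ ($\mu_i\in\mathbb{R}^n$, $\sum\lambda_i=1$, $\Sigma$ real symmetric $n\times n$) the cumulant vector is the truncation of $\log\big(\sum_i\lambda_i\exp(u^t\mu_i+\frac12u^t\Sigma u)\big)$; $\log(\operatorname{Sec}^H_k(\mathcal G_{n,d}))$ is the (closure of the) set of these. Let $\Theta^0_{n,k}=\{((L_i),(\lambda_i))\in V^k\times\mathbb{R}^k:\sum\lambda_i=1,\ \sum\lambda_iL_i=0\}$ (centered Dirac mixtures), for $A=((L_i),(\lambda_i))$ let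 $K_A(u)=\log(\sum_i\lambda_ie^{L_i(u)})$ with homogeneous parts $K_A(u)_j$, let $\phi_{n,k,d}:\Theta^0_{n,k}\to\mathbb{A}^{K,3}_{n,d}$, $A\mapsto K_A(u)_3+\dots+K_A(u)_d$, and $C^0_{n,k,d}=\overline{\phi_{n,k,d}(\Theta^0_{n,k})}$. *)

theory Defs
  imports "HOL-Analysis.Analysis"
begin

(* Variables u = (u_1..u_n) are vectors in real^'n ('n finite, n = CARD('n) >= 1).
   A linear form L in V is represented by its coefficient vector mu, L(u) = mu \<bullet> u.
   An element of the cumulant space A^K_{n,d} (a truncated series with terms of degree
   1..d) is represented by its homogeneous components, as polynomial functions:
   c :: nat \<Rightarrow> (real^'n \<Rightarrow> real), c j = degree-j part, c j = 0 outside 1..d.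
   Topology: the product (pointwise) topology of HOL-Analysis Function_Topology. *)

type_synonym 'n cumvec = "nat \<Rightarrow> (real^'n \<Rightarrow> real)"

definition taylor_coeff :: "(real \<Rightarrow> real) \<Rightarrow> nat \<Rightarrow> real" where
  "taylor_coeff g j = (deriv ^^ j) g 0 / fact j"

definition hom_part :: "(real^'n::finite \<Rightarrow> real) \<Rightarrow> nat \<Rightarrow> real^'n \<Rightarrow> real" where
  "hom_part K j v = taylor_coeff (\<lambda>t. K (t *\<^sub>R v)) j"

text \<open>Cumulant generating function of a homoscedastic Gaussian mixture.\<close>
definition K_hom :: "nat \<Rightarrow> (nat \<Rightarrow> real^'n) \<Rightarrow> (nat \<Rightarrow> real) \<Rightarrow> real^'n^'n \<Rightarrow> real^'n \<Rightarrow> real" where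
  "K_hom k mu lam S u =
     ln (\<Sum>i<k. lam i * exp (mu i \<bullet> u + (1/2) * (u \<bullet> (S *v u))))"

definition cum_trunc :: "nat \<Rightarrow> (real^'n \<Rightarrow> real) \<Rightarrow> 'n::finite cumvec" where
  "cum_trunc d K = (\<lambda>j. if 1 \<le> j \<and> j \<le> d then hom_part K j else (\<lambda>_. 0))"

text \<open>log(Sec^H_k(G_{n,d})) before closure: set of cumulant vectors of homoscedastic
  parameters ((mu_i),(lambda_i),Sigma) with sum lambda_i = 1, Sigma symmetric.\<close>
definition logSecH_param :: "nat \<Rightarrow> nat \<Rightarrow> 'n::finite cumvec set" where
  "logSecH_param k d = {cum_trunc d (K_hom k mu lam S) | mu lam S.
       (\<Sum>i<k. lam i) = 1 \<and> transpose S = S}"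

text \<open>Theta^0_{n,k}: centered Dirac mixtures.\<close>
definition Theta0 :: "nat \<Rightarrow> ((nat \<Rightarrow> real^'n) \<times> (nat \<Rightarrow> real)) set" where
  "Theta0 k = {(L, lam). (\<Sum>i<k. lam i) = 1 \<and> (\<Sum>i<k. lam i *\<^sub>R L i) = 0}"

definition K_A :: "nat \<Rightarrow> (nat \<Rightarrow> real^'n) \<Rightarrow> (nat \<Rightarrow> real) \<Rightarrow> real^'n \<Rightarrow> real" where
  "K_A k L lam u = ln (\<Sum>i<k. lam i * exp (L i \<bullet> u))"

definition phi :: "nat \<Rightarrow> nat \<Rightarrow> (nat \<Rightarrow> real^'n) \<times> (nat \<Rightarrow> real) \<Rightarrow> 'n::finite cumvec" where
  "phi k d A = (\<lambda>j. if 3 \<le> j \<and> j \<le> d then hom_part (K_A k (fst A) (snd A)) j else (\<lambda>_. 0))"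

definition C0 :: "nat \<Rightarrow> nat \<Rightarrow> 'n::finite cumvec set" where
  "C0 k d = closure (phi k d ` Theta0 k)"

definition cone_over :: "nat \<Rightarrow> 'n cumvec set \<Rightarrow> 'n::finite cumvec set" where
  "cone_over d C = {c. c 0 = (\<lambda>_. 0)
      \<and> (\<exists>w::real^'n. c 1 = (\<lambda>v. w \<bullet> v))
      \<and> (\<exists>M::real^'n^'n. c 2 = (\<lambda>v. v \<bullet> (M *v v)))
      \<and> (\<forall>j>d. c j = (\<lambda>_. 0))
      \<and> (\<lambda>j. if 3 \<le> j \<and> j \<le> d then c j else (\<lambda>_. 0)) \<in> C}"

end

theory Submission
  imports Defs
begin

text \<open>
  Along a line \<open>t \<mapsto> t v\<close>, with \<open>w = \<Sum>\<^sub>i \<lambda>\<^sub>i \<mu>\<^sub>i\<close>, the cumulant generating function of a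
  homoscedastic mixture splits as
  \<open>K(t v) = (w \<bullet> v) t + (v \<bullet> \<Sigma> v) t\<^sup>2 / 2 + ln (\<Sum>\<^sub>i \<lambda>\<^sub>i exp (t (\<mu>\<^sub>i - w) \<bullet> v))\<close>.
  Hence its homogeneous parts of degree at least 3 are those of the centered Dirac mixture
  \<open>((\<mu>\<^sub>i - w), \<lambda>)\<close>, the linear part is \<open>w\<close>, and the quadratic part is \<open>\<Sigma>/2\<close> plus the
  covariance of the Dirac mixture, which can be made arbitrary by the choice of \<open>\<Sigma>\<close>.
  So the parameter image lies in the cone over \<open>\<phi>(\<Theta>\<^sup>0)\<close>, and every point of that cone is
  obtained from a point of \<open>\<phi>(\<Theta>\<^sup>0)\<close> by the continuous map prescribing degrees 1 and 2.
  Both inclusions between the closures follow, since being a linear or a quadratic form is a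
  closed condition in the product topology.
\<close>

text \<open>
  \<open>deriv f x\<close> is an unspecified value where \<open>f\<close> is not differentiable, so \<open>deriv ^^ i\<close> is
  additive only on sufficiently differentiable functions.
\<close>

definition times_differentiable_on :: "nat \<Rightarrow> 'a set \<Rightarrow> ('a::real_normed_field \<Rightarrow> 'a) \<Rightarrow> bool" where
  "times_differentiable_on n U f \<longleftrightarrow> (\<forall>i<n. \<forall>x\<in>U. (deriv ^^ i) f field_differentiable (at x))"

lemma times_differentiable_on_0 [simp]: "times_differentiable_on 0 U f"
  by (simp add: times_differentiable_on_def)

lemma times_differentiable_on_Suc:
  "times_differentiable_on (Suc n) U f \<longleftrightarrow>
     (\<forall>x\<in>U. f field_differentiable (at x)) \<and> times_differentiable_on n U (deriv f)"
  unfolding times_differentiable_on_def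
  by (auto simp: less_Suc_eq_0_disj funpow_Suc_right simp del: funpow.simps)

lemma times_differentiable_on_mono:
  "times_differentiable_on n U f \<Longrightarrow> m \<le> n \<Longrightarrow> times_differentiable_on m U f"
  unfolding times_differentiable_on_def by auto

lemma higher_deriv_cong_open:
  assumes "open U" "\<And>x. x \<in> U \<Longrightarrow> f x = g x" "x \<in> U"
  shows "(deriv ^^ i) f x = (deriv ^^ i) g x"
  by (rule higher_deriv_cong_ev) (use assms in \<open>auto simp: eventually_nhds\<close>)

lemma field_differentiable_transform_open:
  assumes "g field_differentiable (at x)" "open U" "x \<in> U" "\<And>y. y \<in> U \<Longrightarrow> f y = g y"
  shows "f field_differentiable (at x)"
  using assms unfolding field_differentiable_def
  by (metis has_field_derivative_transform_within_open)

lemma times_differentiable_on_cong: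
  assumes "open U" "\<And>x. x \<in> U \<Longrightarrow> f x = g x" "times_differentiable_on n U g"
  shows "times_differentiable_on n U f"
  unfolding times_differentiable_on_def
proof safe
  fix i x assume "i < n" "x \<in> U"
  then have "(deriv ^^ i) g field_differentiable at x"
    using assms(3) by (auto simp: times_differentiable_on_def)
  then show "(deriv ^^ i) f field_differentiable at x"
    by (rule field_differentiable_transform_open[OF _ assms(1) \<open>x \<in> U\<close>])
       (rule higher_deriv_cong_open[OF assms(1,2)])
qed

lemma higher_deriv_add_open:
  assumes "open U" "times_differentiable_on n U f" "times_differentiable_on n U g" "i \<le> n" "x \<in> U"
  shows "(deriv ^^ i) (\<lambda>t. f t + g t) x = (deriv ^^ i) f x + (deriv ^^ i) g x"
  using assms(4,5)
proof (induction i arbitrary: x)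
  case (Suc i)
  have "(deriv ^^ Suc i) (\<lambda>t. f t + g t) x = deriv (\<lambda>t. (deriv ^^ i) f t + (deriv ^^ i) g t) x"
    by (simp, rule deriv_cong_ev) (use Suc assms(1) in \<open>auto simp: eventually_nhds\<close>)
  also have "\<dots> = (deriv ^^ Suc i) f x + (deriv ^^ Suc i) g x"
    using assms(2,3) Suc.prems by (simp, intro deriv_add) (auto simp: times_differentiable_on_def)
  finally show ?case .
qed simp

lemma times_differentiable_on_add:
  assumes "open U" "times_differentiable_on n U f" "times_differentiable_on n U g"
  shows "times_differentiable_on n U (\<lambda>t. f t + g t)"
  unfolding times_differentiable_on_def
proof safe
  fix i x assume i: "i < n" and x: "x \<in> U"
  have "(\<lambda>t. (deriv ^^ i) f t + (deriv ^^ i) g t) field_differentiable at x"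
    using assms i x by (intro field_differentiable_add) (auto simp: times_differentiable_on_def)
  then show "(deriv ^^ i) (\<lambda>t. f t + g t) field_differentiable at x"
    by (rule field_differentiable_transform_open[OF _ assms(1) x])
       (use i in \<open>auto intro: higher_deriv_add_open[OF assms]\<close>)
qed

lemma times_differentiable_on_mult:
  assumes "open U"
  shows "times_differentiable_on n U f \<Longrightarrow> times_differentiable_on n U g \<Longrightarrow>
    times_differentiable_on n U (\<lambda>t. f t * g t)"
proof (induction n arbitrary: f g)
  case (Suc n)
  have f: "\<forall>x\<in>U. f field_differentiable at x" "times_differentiable_on n U (deriv f)"
    and g: "\<forall>x\<in>U. g field_differentiable at x" "times_differentiable_on n U (deriv g)"
    using Suc.prems by (auto simp: times_differentiable_on_Suc)
  have "times_differentiable_on n U f" "times_differentiable_on n U g"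
    using Suc.prems times_differentiable_on_mono le_SucI by blast+
  with f g have "times_differentiable_on n U (\<lambda>t. f t * deriv g t + deriv f t * g t)"
    by (intro times_differentiable_on_add assms Suc.IH)
  then have "times_differentiable_on n U (deriv (\<lambda>t. f t * g t))"
    by (rule times_differentiable_on_cong[OF assms, rotated]) (use f g in auto)
  with f g show ?case
    by (auto simp: times_differentiable_on_Suc intro: field_differentiable_mult)
qed simp

lemma times_differentiable_on_const: "times_differentiable_on n U (\<lambda>t. c)"
proof -
  have "(deriv ^^ i) (\<lambda>t. c) = (\<lambda>t. if i = 0 then c else 0)" for i
    by (induction i) auto
  then show ?thesis
    by (simp add: times_differentiable_on_def)
qed

lemma higher_deriv_quadratic:
  fixes m q :: real
  shows "(deriv ^^ j) (\<lambda>t. m * t + q / 2 * t\<^sup>2) =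
    (case j of 0 \<Rightarrow> (\<lambda>t. m * t + q / 2 * t\<^sup>2) | Suc 0 \<Rightarrow> (\<lambda>t. m + q * t) | Suc (Suc 0) \<Rightarrow> (\<lambda>t. q)
       | _ \<Rightarrow> (\<lambda>t. 0))"
proof (induction j)
  case (Suc j)
  have "deriv (\<lambda>t. m * t + q / 2 * t\<^sup>2) = (\<lambda>t. m + q * t)"
    by (rule ext, rule DERIV_imp_deriv) (auto intro!: derivative_eq_intros)
  moreover have "deriv (\<lambda>t. m + q * t) = (\<lambda>t. q)"
    by (rule ext, rule DERIV_imp_deriv) (auto intro!: derivative_eq_intros)
  ultimately show ?case
    using Suc by (auto split: nat.split)
qed simp

lemma times_differentiable_on_quadratic:
  fixes m q :: real
  shows "times_differentiable_on n U (\<lambda>t. m * t + q / 2 * t\<^sup>2)"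
proof -
  have "(deriv ^^ i) (\<lambda>t. m * t + q / 2 * t\<^sup>2) field_differentiable at x" for i x
    unfolding higher_deriv_quadratic field_differentiable_def
    by (auto split: nat.split intro!: derivative_eq_intros)
  then show ?thesis by (simp add: times_differentiable_on_def)
qed

lemma times_differentiable_on_inverse:
  assumes "open U" "\<And>x. x \<in> U \<Longrightarrow> f x \<noteq> 0"
  shows "times_differentiable_on n U f \<Longrightarrow> times_differentiable_on n U (\<lambda>t. inverse (f t))"
proof (induction n)
  case (Suc n)
  have f: "\<forall>x\<in>U. f field_differentiable at x" "times_differentiable_on n U (deriv f)"
    using Suc.prems by (auto simp: times_differentiable_on_Suc)
  have "times_differentiable_on n U (\<lambda>t. inverse (f t))"
    using Suc times_differentiable_on_mono le_SucI by blast
  with f have "times_differentiable_on n U (\<lambda>t. (-1) * deriv f t * (inverse (f t) * inverse (f t)))"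
    by (intro times_differentiable_on_mult times_differentiable_on_const assms)
  then have "times_differentiable_on n U (deriv (\<lambda>t. inverse (f t)))"
    by (rule times_differentiable_on_cong[OF assms(1), rotated])
       (use f assms(2) in \<open>auto simp: power2_eq_square field_simps\<close>)
  with f assms(2) show ?case
    by (auto simp: times_differentiable_on_Suc intro: field_differentiable_inverse)
qed simp

definition expsum :: "nat \<Rightarrow> (nat \<Rightarrow> real) \<Rightarrow> (nat \<Rightarrow> real) \<Rightarrow> real \<Rightarrow> real" where
  "expsum k c b t = (\<Sum>i<k. c i * exp (t * b i))"

lemma open_expsum_pos: "open {t. 0 < expsum k c b t}"
  unfolding expsum_def by (intro open_Collect_less continuous_intros)

lemma expsum_at_0: "expsum k c b 0 = (\<Sum>i<k. c i)"
  by (simp add: expsum_def)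

lemma has_field_derivative_expsum:
  "(expsum k c b has_field_derivative expsum k (\<lambda>i. c i * b i) b t) (at t)"
  unfolding expsum_def
  by (auto intro!: derivative_eq_intros simp: sum_distrib_left mult_ac)

lemma deriv_expsum: "deriv (expsum k c b) = expsum k (\<lambda>i. c i * b i) b"
  using DERIV_imp_deriv has_field_derivative_expsum by blast

lemma field_differentiable_expsum: "expsum k c b field_differentiable (at t)"
  using field_differentiable_def has_field_derivative_expsum by blast

lemma times_differentiable_on_expsum: "times_differentiable_on n U (expsum k c b)"
proof -
  have "(deriv ^^ j) (expsum k c b) = expsum k (\<lambda>i. c i * b i ^ j) b" for j
    by (induction j arbitrary: c) (simp_all add: deriv_expsum mult_ac funpow_Suc_right del: funpow.simps)
  then show ?thesis
    by (simp add: times_differentiable_on_def field_differentiable_expsum)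
qed

lemma deriv_ln_expsum:
  assumes "0 < expsum k c b t"
  shows "deriv (\<lambda>t. ln (expsum k c b t)) t = expsum k (\<lambda>i. c i * b i) b t / expsum k c b t"
  using assms by (intro DERIV_imp_deriv) (auto intro!: derivative_eq_intros has_field_derivative_expsum)

lemma times_differentiable_on_ln_expsum:
  "times_differentiable_on n {t. 0 < expsum k c b t} (\<lambda>t. ln (expsum k c b t))"
proof (cases n)
  case (Suc m)
  define U where "U = {t. 0 < expsum k c b t}"
  have U: "open U"
    unfolding U_def by (rule open_expsum_pos)
  have "times_differentiable_on m U (\<lambda>t. expsum k (\<lambda>i. c i * b i) b t * inverse (expsum k c b t))"
    by (intro times_differentiable_on_mult times_differentiable_on_inverse U times_differentiable_on_expsum)
       (auto simp: U_def)
  then have "times_differentiable_on m U (deriv (\<lambda>t. ln (expsum k c b t)))"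
    by (rule times_differentiable_on_cong[OF U, rotated]) (simp add: U_def deriv_ln_expsum field_simps)
  moreover have "(\<lambda>t. ln (expsum k c b t)) field_differentiable (at t)" if "t \<in> U" for t
    using that unfolding U_def field_differentiable_def
    by (auto intro!: derivative_eq_intros has_field_derivative_expsum)
  ultimately show ?thesis
    using Suc by (simp add: times_differentiable_on_Suc U_def)
qed simp

lemma taylor_coeff_ln_expsum:
  assumes "(\<Sum>i<k. c i) = 1"
  shows "taylor_coeff (\<lambda>t. ln (expsum k c b t)) 1 = (\<Sum>i<k. c i * b i)"
    and "taylor_coeff (\<lambda>t. ln (expsum k c b t)) 2 =
           ((\<Sum>i<k. c i * (b i)\<^sup>2) - (\<Sum>i<k. c i * b i)\<^sup>2) / 2"
proof -
  define P where "P = expsum k c b"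
  define P1 where "P1 = expsum k (\<lambda>i. c i * b i) b"
  define U where "U = {t. 0 < P t}"
  have U: "open U"
    unfolding U_def P_def by (rule open_expsum_pos)
  have P0: "P 0 = 1" and P10: "P1 0 = (\<Sum>i<k. c i * b i)"
    and P1'0: "deriv P1 0 = (\<Sum>i<k. c i * (b i)\<^sup>2)"
    using assms by (simp_all add: P_def P1_def deriv_expsum expsum_def power2_eq_square mult_ac)
  have "0 \<in> U" by (simp add: U_def P0)
  have dh: "deriv (\<lambda>t. ln (P t)) t = P1 t / P t" if "t \<in> U" for t
    using that deriv_ln_expsum unfolding U_def P_def P1_def by simp
  show "taylor_coeff (\<lambda>t. ln (expsum k c b t)) 1 = (\<Sum>i<k. c i * b i)"
    using dh[OF \<open>0 \<in> U\<close>] by (simp add: taylor_coeff_def P_def[symmetric] P0 P10)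
  have "(deriv ^^ 2) (\<lambda>t. ln (P t)) 0 = deriv (\<lambda>t. P1 t / P t) 0"
    unfolding numeral_2_eq_2 funpow.simps o_apply funpow_0
    by (rule deriv_cong_ev) (use U \<open>0 \<in> U\<close> dh in \<open>auto simp: eventually_nhds\<close>)
  also have "\<dots> = (deriv P1 0 * P 0 - P1 0 * deriv P 0) / (P 0)\<^sup>2"
    using P0 by (intro deriv_divide) (auto simp: P_def P1_def field_differentiable_expsum)
  also have "\<dots> = (\<Sum>i<k. c i * (b i)\<^sup>2) - (\<Sum>i<k. c i * b i)\<^sup>2"
    using deriv_expsum[of k c b] by (simp add: P0 P10 P1'0 power2_eq_square flip: P_def P1_def)
  finally show "taylor_coeff (\<lambda>t. ln (expsum k c b t)) 2 =
      ((\<Sum>i<k. c i * (b i)\<^sup>2) - (\<Sum>i<k. c i * b i)\<^sup>2) / 2"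
    by (simp add: taylor_coeff_def P_def)
qed

lemma taylor_coeff_add_quadratic:
  fixes m q :: real
  assumes "open U" "0 \<in> U" "\<And>n. times_differentiable_on n U h"
    and "\<And>t. t \<in> U \<Longrightarrow> g t = h t + (m * t + q / 2 * t\<^sup>2)"
  shows "taylor_coeff g j = taylor_coeff h j + (if j = 1 then m else if j = 2 then q / 2 else 0)"
proof -
  have "(deriv ^^ j) g 0 = (deriv ^^ j) (\<lambda>t. h t + (m * t + q / 2 * t\<^sup>2)) 0"
    using assms(1,4,2) by (rule higher_deriv_cong_open)
  also have "\<dots> = (deriv ^^ j) h 0 + (deriv ^^ j) (\<lambda>t. m * t + q / 2 * t\<^sup>2) 0"
    by (rule higher_deriv_add_open[OF assms(1,3) times_differentiable_on_quadratic order.refl assms(2)])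
  finally show ?thesis
    unfolding taylor_coeff_def higher_deriv_quadratic
    by (auto simp: add_divide_distrib numeral_2_eq_2 split: nat.split)
qed

lemma hom_part_K_A:
  "hom_part (K_A k L lam) j v = taylor_coeff (\<lambda>t. ln (expsum k lam (\<lambda>i. L i \<bullet> v) t)) j"
  by (simp add: hom_part_def K_A_def expsum_def mult_ac)

lemma K_hom_line:
  fixes mu :: "nat \<Rightarrow> real^'n::finite"
  assumes "0 < expsum k lam (\<lambda>i. (mu i - w) \<bullet> v) t"
  shows "K_hom k mu lam S (t *\<^sub>R v) =
    ln (expsum k lam (\<lambda>i. (mu i - w) \<bullet> v) t) + ((w \<bullet> v) * t + (v \<bullet> (S *v v)) / 2 * t\<^sup>2)"
proof -
  have "(\<Sum>i<k. lam i * exp (mu i \<bullet> (t *\<^sub>R v) + 1 / 2 * ((t *\<^sub>R v) \<bullet> (S *v (t *\<^sub>R v)))))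
      = expsum k lam (\<lambda>i. (mu i - w) \<bullet> v) t * exp ((w \<bullet> v) * t + (v \<bullet> (S *v v)) / 2 * t\<^sup>2)"
    unfolding expsum_def sum_distrib_right
    by (intro sum.cong refl)
       (simp add: matrix_vector_mult_scaleR inner_diff_left power2_eq_square algebra_simps flip: exp_add)
  with assms show ?thesis
    by (simp add: K_hom_def ln_mult)
qed

lemma hom_part_K_hom:
  fixes mu :: "nat \<Rightarrow> real^'n::finite"
  assumes "(\<Sum>i<k. lam i) = 1"
  defines "w \<equiv> \<Sum>i<k. lam i *\<^sub>R mu i"
  shows "hom_part (K_hom k mu lam S) j v = hom_part (K_A k (\<lambda>i. mu i - w) lam) j v
           + (if j = 1 then w \<bullet> v else if j = 2 then v \<bullet> (S *v v) / 2 else 0)"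
  unfolding hom_part_K_A unfolding hom_part_def
  by (rule taylor_coeff_add_quadratic[OF open_expsum_pos _ times_differentiable_on_ln_expsum K_hom_line])
     (use assms in \<open>auto simp: expsum_at_0\<close>)

lemma hom_part_K_A_centered:
  fixes L :: "nat \<Rightarrow> real^'n::finite"
  assumes "(\<Sum>i<k. lam i) = 1" "(\<Sum>i<k. lam i *\<^sub>R L i) = 0"
  shows "hom_part (K_A k L lam) 1 v = 0"
    and "hom_part (K_A k L lam) 2 v = (\<Sum>i<k. lam i * (L i \<bullet> v)\<^sup>2) / 2"
proof -
  have "(\<Sum>i<k. lam i * (L i \<bullet> v)) = (\<Sum>i<k. lam i *\<^sub>R L i) \<bullet> v"
    by (simp add: inner_sum_left)
  then show "hom_part (K_A k L lam) 1 v = 0" "hom_part (K_A k L lam) 2 v = (\<Sum>i<k. lam i * (L i \<bullet> v)\<^sup>2) / 2"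
    using taylor_coeff_ln_expsum[OF assms(1), of "\<lambda>i. L i \<bullet> v"] assms(2)
    by (simp_all add: hom_part_K_A)
qed

lemma inner_matrix_vector_mult_eq_sum:
  fixes M :: "real^'n::finite^'n"
  shows "v \<bullet> (M *v v) = (\<Sum>r\<in>UNIV. \<Sum>s\<in>UNIV. v$r * M$r$s * v$s)"
  by (simp add: inner_vec_def matrix_vector_mult_def sum_distrib_left mult_ac)

lemma inner_transpose_matrix_vector_mult:
  fixes M :: "real^'n::finite^'n"
  shows "v \<bullet> (transpose M *v v) = v \<bullet> (M *v v)"
  by (simp add: inner_commute[of v] dot_lmul_matrix)

definition second_moment :: "nat \<Rightarrow> (nat \<Rightarrow> real^'n) \<Rightarrow> (nat \<Rightarrow> real) \<Rightarrow> real^'n^'n" where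
  "second_moment k L lam = (\<chi> r s. \<Sum>i<k. lam i * (L i $ r * L i $ s))"

lemma inner_second_moment:
  fixes L :: "nat \<Rightarrow> real^'n::finite"
  shows "v \<bullet> (second_moment k L lam *v v) = (\<Sum>i<k. lam i * (L i \<bullet> v)\<^sup>2)"
proof -
  have "(L \<bullet> v)\<^sup>2 = (\<Sum>r\<in>UNIV. \<Sum>s\<in>UNIV. v$r * (L$r * L$s) * v$s)" for L :: "real^'n"
    by (simp add: inner_vec_def power2_eq_square sum_product mult_ac)
  then show ?thesis
    unfolding inner_matrix_vector_mult_eq_sum second_moment_def
    by (simp add: sum_distrib_left sum_distrib_right sum.swap[of _ "{..<k}"] mult_ac)
qed

lemma linear_form_iff:
  fixes f :: "real^'n::finite \<Rightarrow> real"
  shows "(\<exists>w. f = (\<lambda>v. w \<bullet> v)) \<longleftrightarrow> (\<forall>v. f v = (\<Sum>i\<in>UNIV. v$i * f (axis i 1)))"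
proof
  assume "\<exists>w. f = (\<lambda>v. w \<bullet> v)"
  then obtain w where f: "f = (\<lambda>v. w \<bullet> v)" ..
  then have "f (axis i 1) = w$i" for i
    by (simp add: inner_axis)
  with f show "\<forall>v. f v = (\<Sum>i\<in>UNIV. v$i * f (axis i 1))"
    by (simp add: inner_vec_def mult.commute)
next
  assume f: "\<forall>v. f v = (\<Sum>i\<in>UNIV. v$i * f (axis i 1))"
  have "f = (\<lambda>v. (\<chi> i. f (axis i 1)) \<bullet> v)"
  proof
    fix v
    show "f v = (\<chi> i. f (axis i 1)) \<bullet> v"
      using f[rule_format, of v] by (simp add: inner_vec_def mult.commute)
  qed
  then show "\<exists>w. f = (\<lambda>v. w \<bullet> v)" ..
qed

definition polar_matrix :: "(real^'n \<Rightarrow> real) \<Rightarrow> real^'n^'n" where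
  "polar_matrix f = (\<chi> r s. (f (axis r 1 + axis s 1) - f (axis r 1) - f (axis s 1)) / 2)"

lemma polar_matrix_quadratic_form:
  fixes M :: "real^'n::finite^'n"
  shows "polar_matrix (\<lambda>v. v \<bullet> (M *v v)) = (1/2) *\<^sub>R (M + transpose M)"
proof -
  have "axis r 1 \<bullet> (M *v axis s 1) = M$r$s" for r s
    by (simp add: matrix_vector_mult_basis column_def inner_axis')
  then show ?thesis
    by (simp add: polar_matrix_def vec_eq_iff transpose_def matrix_vector_right_distrib
          inner_add_left inner_add_right)
qed

lemma quadratic_form_iff:
  fixes f :: "real^'n::finite \<Rightarrow> real"
  shows "(\<exists>M. f = (\<lambda>v. v \<bullet> (M *v v))) \<longleftrightarrow> (\<forall>v. f v = v \<bullet> (polar_matrix f *v v))"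
proof
  assume "\<exists>M. f = (\<lambda>v. v \<bullet> (M *v v))"
  then obtain M where f: "f = (\<lambda>v. v \<bullet> (M *v v))" ..
  have "v \<bullet> (polar_matrix f *v v) = (v \<bullet> (M *v v) + v \<bullet> (transpose M *v v)) / 2" for v
    by (simp add: f polar_matrix_quadratic_form matrix_vector_mult_add_rdistrib inner_add_right
        flip: scaleR_matrix_vector_assoc del: transpose_matrix_vector)
  then show "\<forall>v. f v = v \<bullet> (polar_matrix f *v v)"
    by (simp add: inner_transpose_matrix_vector_mult del: transpose_matrix_vector) (simp add: f)
qed blast

definition high_part :: "nat \<Rightarrow> 'n::finite cumvec \<Rightarrow> 'n cumvec" where
  "high_part d c = (\<lambda>j. if 3 \<le> j \<and> j \<le> d then c j else (\<lambda>_. 0))"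

definition set_low_degrees ::
    "nat \<Rightarrow> (real^'n \<Rightarrow> real) \<Rightarrow> (real^'n \<Rightarrow> real) \<Rightarrow> 'n::finite cumvec \<Rightarrow> 'n cumvec" where
  "set_low_degrees d c1 c2 x = (\<lambda>j. if j = 1 then c1 else if j = 2 then c2 else high_part d x j)"

lemmas cone_over_def' = cone_over_def[folded high_part_def]

lemma cone_over_mono: "C \<subseteq> D \<Longrightarrow> cone_over d C \<subseteq> cone_over d D"
  unfolding cone_over_def by blast

lemma continuous_on_component [continuous_intros]:
  "continuous_on S (\<lambda>c :: 'a \<Rightarrow> 'b \<Rightarrow> 'c::topological_space. c j v)"
  by (rule continuous_on_subset[OF continuous_on_product_then_coordinatewise[OF
        continuous_on_product_coordinates]]) simp

lemma continuous_on_high_part: "continuous_on S (high_part d :: 'n::finite cumvec \<Rightarrow> _)"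
  unfolding high_part_def
proof (rule continuous_on_coordinatewise_then_product)
  have "continuous_on S (\<lambda>c::'n cumvec. if P then c j else (\<lambda>_. 0))" for P j
    by (cases P) (simp_all add: continuous_on_const continuous_on_subset[OF continuous_on_product_coordinates])
  then show "continuous_on S (\<lambda>c::'n cumvec. if 3 \<le> j \<and> j \<le> d then c j else (\<lambda>_. 0))" for j .
qed

lemma closed_cone_over:
  assumes "closed C"
  shows "closed (cone_over d C :: 'n::finite cumvec set)"
proof -
  have "cone_over d C =
      {c. \<forall>v. c 0 v = 0} \<inter> {c. \<forall>v. c 1 v = (\<Sum>i\<in>UNIV. v$i * c 1 (axis i 1))}
      \<inter> {c. \<forall>v. c 2 v = v \<bullet> (polar_matrix (c 2) *v v)} \<inter> {c. \<forall>j v. d < j \<longrightarrow> c j v = 0}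
      \<inter> high_part d -` C"
    unfolding cone_over_def' linear_form_iff quadratic_form_iff by (auto simp: fun_eq_iff)
  also have "closed \<dots>"
  proof (intro closed_Int closed_Collect_all closed_vimage[OF assms continuous_on_high_part])
    fix v :: "real^'n"
    show "closed {c::'n cumvec. c 0 v = 0}"
      by (intro closed_Collect_eq continuous_intros)
    show "closed {c::'n cumvec. c 1 v = (\<Sum>i\<in>UNIV. v$i * c 1 (axis i 1))}"
      by (intro closed_Collect_eq continuous_intros)
    show "closed {c::'n cumvec. c 2 v = v \<bullet> (polar_matrix (c 2) *v v)}"
      unfolding inner_matrix_vector_mult_eq_sum polar_matrix_def
      by (intro closed_Collect_eq continuous_intros) auto
    fix j
    show "closed {c::'n cumvec. d < j \<longrightarrow> c j v = 0}"
      by (cases "d < j") (simp_all add: closed_Collect_eq continuous_intros)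
  qed
  finally show ?thesis .
qed

lemma Theta0_centered:
  fixes mu :: "nat \<Rightarrow> real^'n::finite"
  assumes "(\<Sum>i<k. lam i) = 1"
  shows "((\<lambda>i. mu i - (\<Sum>i<k. lam i *\<^sub>R mu i)), lam) \<in> Theta0 k"
  using assms by (simp add: Theta0_def scaleR_diff_right sum_subtractf flip: scaleR_sum_left)

lemma cum_trunc_K_hom_in_cone_over:
  fixes mu :: "nat \<Rightarrow> real^'n::finite"
  assumes "(\<Sum>i<k. lam i) = 1" "3 \<le> d"
  shows "cum_trunc d (K_hom k mu lam S) \<in> cone_over d (phi k d ` Theta0 k)"
proof -
  define w where "w = (\<Sum>i<k. lam i *\<^sub>R mu i)"
  define L where "L = (\<lambda>i. mu i - w)"
  have A: "(L, lam) \<in> Theta0 k"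
    unfolding L_def w_def using assms(1) by (rule Theta0_centered)
  then have "(\<Sum>i<k. lam i *\<^sub>R L i) = 0"
    by (simp add: Theta0_def)
  note K_A = hom_part_K_A_centered[OF assms(1) this]
  note K_hom = hom_part_K_hom[OF assms(1), of mu S, folded w_def, folded L_def]
  have "hom_part (K_hom k mu lam S) 1 = (\<lambda>v. w \<bullet> v)"
    using K_hom[of 1] K_A(1) by auto
  moreover have "hom_part (K_hom k mu lam S) 2 = (\<lambda>v. v \<bullet> (((1/2) *\<^sub>R (S + second_moment k L lam)) *v v))"
    using K_hom[of 2] K_A(2)
    by (auto simp: matrix_vector_mult_add_rdistrib inner_add_right inner_second_moment add_divide_distrib
        simp flip: scaleR_matrix_vector_assoc)
  moreover have "high_part d (cum_trunc d (K_hom k mu lam S)) = phi k d (L, lam)"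
    using K_hom by (auto simp: high_part_def cum_trunc_def phi_def fun_eq_iff)
  ultimately show ?thesis
    using A assms(2) unfolding cone_over_def' by (auto simp: cum_trunc_def)
qed

lemma continuous_on_set_low_degrees: "continuous_on S (set_low_degrees d c1 c2)"
  unfolding set_low_degrees_def
proof (rule continuous_on_coordinatewise_then_product)
  fix j
  have "continuous_on S (\<lambda>x. high_part d x j)"
    by (rule continuous_on_product_then_coordinatewise[OF continuous_on_high_part])
  then show "continuous_on S (\<lambda>x. if j = 1 then c1 else if j = 2 then c2 else high_part d x j)"
    by (cases "j = 1"; cases "j = 2") (simp_all add: continuous_on_const)
qed

lemma set_low_degrees_high_part:
  assumes "c \<in> cone_over d C"
  shows "set_low_degrees d (c 1) (c 2) (high_part d c) = c"
  using assms
  by (auto simp: fun_eq_iff set_low_degrees_def high_part_def cone_over_def not_le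
      numeral_3_eq_3 less_Suc_eq)

lemma set_low_degrees_phi_in_logSecH_param:
  fixes w :: "real^'n::finite"
  assumes "A \<in> Theta0 k" "3 \<le> d"
  shows "set_low_degrees d (\<lambda>v. w \<bullet> v) (\<lambda>v. v \<bullet> (M *v v)) (phi k d A) \<in> logSecH_param k d"
proof -
  obtain L lam where A: "A = (L, lam)" "(\<Sum>i<k. lam i) = 1" "(\<Sum>i<k. lam i *\<^sub>R L i) = 0"
    using assms(1) by (cases A) (auto simp: Theta0_def)
  define mu where "mu = (\<lambda>i. L i + w)"
  \<comment> \<open>chosen so that the quadratic part \<open>(v \<bullet> S v + \<Sum>\<^sub>i lam\<^sub>i (L\<^sub>i \<bullet> v)\<^sup>2) / 2\<close> is \<open>v \<bullet> M v\<close>\<close>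
  define S where "S = M + transpose M - second_moment k L lam"
  have w: "(\<Sum>i<k. lam i *\<^sub>R mu i) = w"
    using A by (simp add: mu_def scaleR_add_right sum.distrib flip: scaleR_sum_left)
  have L: "(\<lambda>i. mu i - w) = L"
    by (simp add: mu_def)
  note K_hom = hom_part_K_hom[OF A(2), of mu S, unfolded w L]
  note K_A = hom_part_K_A_centered[OF A(2,3)]
  have S: "v \<bullet> (S *v v) = 2 * (v \<bullet> (M *v v)) - (\<Sum>i<k. lam i * (L i \<bullet> v)\<^sup>2)" for v
    using inner_transpose_matrix_vector_mult[of v M]
    by (simp add: S_def matrix_vector_mult_add_rdistrib matrix_vector_mult_diff_rdistrib
        inner_add_right inner_diff_right inner_second_moment del: transpose_matrix_vector)
  have "hom_part (K_hom k mu lam S) 1 = (\<lambda>v. w \<bullet> v)"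
    using K_hom[of 1] K_A(1) by auto
  moreover have "hom_part (K_hom k mu lam S) 2 = (\<lambda>v. v \<bullet> (M *v v))"
    using K_hom[of 2] K_A(2) S by (auto simp: fun_eq_iff field_simps)
  ultimately
  have "set_low_degrees d (\<lambda>v. w \<bullet> v) (\<lambda>v. v \<bullet> (M *v v)) (phi k d A) = cum_trunc d (K_hom k mu lam S)"
    using K_hom assms(2)
    by (auto simp: fun_eq_iff set_low_degrees_def high_part_def cum_trunc_def phi_def A(1))
  moreover have "transpose S = S"
    by (simp add: S_def transpose_def second_moment_def vec_eq_iff mult.commute)
  ultimately show ?thesis
    unfolding logSecH_param_def using A(2) by blast
qed

lemma cone_over_closure_subset_closure:
  assumes "3 \<le> d"
  shows "cone_over d (closure (phi k d ` Theta0 k)) \<subseteq> closure (logSecH_param k d :: 'n::finite cumvec set)"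
proof
  fix c :: "'n cumvec"
  assume c: "c \<in> cone_over d (closure (phi k d ` Theta0 k))"
  then obtain w M where c12: "c 1 = (\<lambda>v. w \<bullet> v)" "c 2 = (\<lambda>v. v \<bullet> (M *v v))"
    and high: "high_part d c \<in> closure (phi k d ` Theta0 k)"
    unfolding cone_over_def' by blast
  define F where "F = set_low_degrees d (\<lambda>v. w \<bullet> v) (\<lambda>v. v \<bullet> (M *v v))"
  have "F ` (phi k d ` Theta0 k) \<subseteq> logSecH_param k d"
    unfolding F_def using set_low_degrees_phi_in_logSecH_param assms by blast
  then have "F ` closure (phi k d ` Theta0 k) \<subseteq> closure (logSecH_param k d)"
    unfolding F_def
    by (intro image_closure_subset continuous_on_set_low_degrees closed_closure)
       (use closure_subset in blast)
  moreover have "c = F (high_part d c)"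
    using set_low_degrees_high_part[OF c] unfolding F_def c12 by simp
  ultimately show "c \<in> closure (logSecH_param k d)"
    using high by blast
qed

theorem lemma3p3:
  fixes k d :: nat
  assumes "k \<ge> 1" and "d \<ge> 3"
  shows "closure (logSecH_param k d :: 'n::finite cumvec set) = cone_over d (C0 k d)"
proof
  have "logSecH_param k d \<subseteq> cone_over d (phi k d ` Theta0 k)"
    using cum_trunc_K_hom_in_cone_over \<open>d \<ge> 3\<close> by (auto simp: logSecH_param_def)
  also have "\<dots> \<subseteq> cone_over d (C0 k d)"
    unfolding C0_def by (intro cone_over_mono closure_subset)
  finally show "closure (logSecH_param k d) \<subseteq> cone_over d (C0 k d)"
    by (intro closure_minimal closed_cone_over) (simp_all add: C0_def)
  show "cone_over d (C0 k d) \<subseteq> closure (logSecH_param k d)"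
    unfolding C0_def using \<open>d \<ge> 3\<close> by (rule cone_over_closure_subset_closure)
qed

end
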